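(* Let $\rho_S$ be a symmetric state on $\mathbb{C}^3\otimes\mathbb{C}^3$ of the form $$\rho_S=\sum_{0\le i\le j\le 2}p_{ij}\,|D_{ij}\rangle\langle D_{ij}| \;+\;\big(\alpha\,|D_{11}\rangle\langle D_{02}| + \alpha^*\,|D_{02}\rangle\langle D_{11}|\big),$$ with $p_{ij}\ge0$, $\sum p_{ij}=1$, whose coefficients satisfy $p_{11}=2p_{02}=\sqrt{2}\,\alpha$. Then $\rho_S$ is separable if and only if it is PPT.
   Context: The two-qutrit Dicke states are $|D_{ii}\rangle=|ii\rangle$ and $|D_{ij}\rangle=(|ij\rangle+|ji\rangle)/\sqrt2$ for $i\ne j$, with $\{|0\rangle,|1\rangle,|2\rangle\}$ the computational basis of $\mathbb{C}^3$. Separable means a convex combination of product states $|a\rangle\langle a|\otimes|b\rangle\langle b|$; PPT means the partial transpose with respect to one subsystem is positive semidefinite. *)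

theory Defs
  imports Complex_Main "HOL-Library.Numeral_Type"
begin

text \<open>Two-qutrit operators: a qutrit basis is indexed by the finite type 3 = {0,1,2};
  an operator on C^3 (x) C^3 is a function on pairs of basis indices (3 \<times> 3).\<close>

type_synonym ket9 = "3 \<times> 3 \<Rightarrow> complex"
type_synonym op9 = "3 \<times> 3 \<Rightarrow> 3 \<times> 3 \<Rightarrow> complex"

definition dicke :: "3 \<Rightarrow> 3 \<Rightarrow> ket9" where
  "dicke i j = (\<lambda>(a, b).
     if i = j then (if a = i \<and> b = i then 1 else 0)
     else (if (a = i \<and> b = j) \<or> (a = j \<and> b = i) then 1 / complex_of_real (sqrt 2) else 0))"

definition outer :: "ket9 \<Rightarrow> ket9 \<Rightarrow> op9" where
  "outer u v = (\<lambda>x y. u x * cnj (v y))"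

definition psd :: "op9 \<Rightarrow> bool" where
  "psd M \<longleftrightarrow> (\<forall>x y. M y x = cnj (M x y)) \<and>
     (\<forall>v :: ket9. 0 \<le> Re (\<Sum>x\<in>UNIV. \<Sum>y\<in>UNIV. cnj (v x) * M x y * v y))"

definition trace9 :: "op9 \<Rightarrow> complex" where
  "trace9 M = (\<Sum>x\<in>UNIV. M x x)"

definition is_state :: "op9 \<Rightarrow> bool" where
  "is_state M \<longleftrightarrow> psd M \<and> trace9 M = 1"

definition partial_transpose :: "op9 \<Rightarrow> op9" where
  "partial_transpose M = (\<lambda>(a, b) (c, d). M (a, d) (c, b))"

definition PPT :: "op9 \<Rightarrow> bool" where
  "PPT M \<longleftrightarrow> psd (partial_transpose M)"

definition unit3 :: "(3 \<Rightarrow> complex) \<Rightarrow> bool" where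
  "unit3 a \<longleftrightarrow> (\<Sum>x\<in>UNIV. (cmod (a x))\<^sup>2) = 1"

definition prod_state :: "(3 \<Rightarrow> complex) \<Rightarrow> (3 \<Rightarrow> complex) \<Rightarrow> op9" where
  "prod_state a b = (\<lambda>(x1, x2) (y1, y2). a x1 * cnj (a y1) * (b x2 * cnj (b y2)))"

definition separable :: "op9 \<Rightarrow> bool" where
  "separable M \<longleftrightarrow> (\<exists>(K::nat) (w::nat \<Rightarrow> real) (a::nat \<Rightarrow> 3 \<Rightarrow> complex) (b::nat \<Rightarrow> 3 \<Rightarrow> complex).
     (\<forall>k<K. 0 \<le> w k \<and> unit3 (a k) \<and> unit3 (b k)) \<and> (\<Sum>k<K. w k) = 1 \<and>
     M = (\<lambda>x y. \<Sum>k<K. complex_of_real (w k) * prod_state (a k) (b k) x y))"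

definition upper_pairs :: "(3 \<times> 3) set" where
  "upper_pairs = {(0,0), (0,1), (0,2), (1,1), (1,2), (2,2)}"

definition rhoS :: "(3 \<Rightarrow> 3 \<Rightarrow> real) \<Rightarrow> complex \<Rightarrow> op9" where
  "rhoS p \<alpha> = (\<lambda>x y.
     (\<Sum>(i, j)\<in>upper_pairs. complex_of_real (p i j) * outer (dicke i j) (dicke i j) x y)
     + \<alpha> * outer (dicke 1 1) (dicke 0 2) x y
     + cnj \<alpha> * outer (dicke 0 2) (dicke 1 1) x y)"

end

theory Submission
  imports Defs
begin

text \<open>With \<open>p11 = 2 p02 = \<surd>2 \<alpha>\<close> the state is \<open>\<Sum>n c_n |w_n\<rangle>\<langle>w_n|\<close>, where
  \<open>w_n = \<Sum>a+b=n \<surd>(C(2,a) C(2,b)) |ab\<rangle>\<close> collects the basis vectors of total degree \<open>n\<close> and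
  \<open>c = (p00, p01/4, p02/2, p12/4, p22)\<close>. For \<open>v_z = (1, \<surd>2 z, z\<^sup>2)\<close> the product states
  \<open>|v_z\<rangle>\<langle>v_z| \<otimes> |v_z\<rangle>\<langle>v_z|\<close>, averaged over five phases of \<open>z\<close>, give \<open>\<Sum>n |z|^(2n) |w_n\<rangle>\<langle>w_n|\<close>,
  and \<open>|22\<rangle>\<langle>22| = |w_4\<rangle>\<langle>w_4|\<close>. So the state is separable once \<open>c_0, ..., c_4\<close> are the moments
  of a measure on \<open>[0, \<infinity>)\<close>, with an extra nonnegative mass allowed in \<open>c_4\<close>. Positivity of the
  partial transpose gives exactly positive semidefiniteness of the Hankel matrices
  \<open>(c_(i+j))\<close> for \<open>i, j \<le> 2\<close> and \<open>(c_(i+j+1))\<close> for \<open>i, j \<le> 1\<close>, and these conditions solve this truncated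
  Stieltjes moment problem with at most two atoms.\<close>

section \<open>Product states and separability\<close>

lemma exhaust_3: "(x::3) = 0 \<or> x = 1 \<or> x = 2"
proof (cases x)
  case (of_int z)
  then have "z = 0 \<or> z = 1 \<or> z = 2" by auto
  then show ?thesis using of_int by auto
qed

lemma UNIV_3: "(UNIV::3 set) = {0, 1, 2}"
  using exhaust_3 by auto

lemma sum_UNIV_3: "(\<Sum>x\<in>UNIV. f x) = f (0::3) + f 1 + f 2"
  unfolding UNIV_3 by (simp add: add.assoc)

lemma sum_UNIV_pair: "(\<Sum>x\<in>UNIV. f x) = (\<Sum>a\<in>UNIV. \<Sum>b\<in>UNIV. f (a, b))"
  by (simp add: sum.cartesian_product flip: UNIV_Times_UNIV)

text \<open>Nonnegative weights are absorbed into the unnormalised vectors.\<close>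

definition sep_cone :: "op9 \<Rightarrow> bool" where
  "sep_cone M \<longleftrightarrow> (\<exists>L. M = (\<lambda>x y. \<Sum>(a, b)\<leftarrow>L. prod_state a b x y))"

lemma sep_cone_prod_state: "sep_cone (prod_state a b)"
  unfolding sep_cone_def by (rule exI[of _ "[(a, b)]"]) simp

lemma sep_cone_add:
  assumes "sep_cone M" "sep_cone N"
  shows "sep_cone (\<lambda>x y. M x y + N x y)"
proof -
  obtain L1 L2 where "M = (\<lambda>x y. \<Sum>(a, b)\<leftarrow>L1. prod_state a b x y)"
    and "N = (\<lambda>x y. \<Sum>(a, b)\<leftarrow>L2. prod_state a b x y)"
    using assms unfolding sep_cone_def by blast
  then show ?thesis
    unfolding sep_cone_def by (intro exI[of _ "L1 @ L2"]) simp
qed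

lemma prod_state_scale:
  "prod_state (\<lambda>i. complex_of_real r * a i) b x y = complex_of_real (r\<^sup>2) * prod_state a b x y"
  by (cases x, cases y) (simp add: prod_state_def power2_eq_square mult_ac)

lemma sep_cone_scale:
  assumes "sep_cone M" "0 \<le> c"
  shows "sep_cone (\<lambda>x y. complex_of_real c * M x y)"
proof -
  obtain L where L: "M = (\<lambda>x y. \<Sum>(a, b)\<leftarrow>L. prod_state a b x y)"
    using assms(1) unfolding sep_cone_def by blast
  let ?L = "map (\<lambda>(a, b). (\<lambda>i. complex_of_real (sqrt c) * a i, b)) L"
  have "(\<lambda>x y. complex_of_real c * M x y) = (\<lambda>x y. \<Sum>(a, b)\<leftarrow>?L. prod_state a b x y)"
    unfolding L using assms(2)
    by (simp add: prod_state_scale sum_list_const_mult[symmetric] case_prod_unfold o_def)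
  then show ?thesis unfolding sep_cone_def by blast
qed

lemma sep_cone_sum:
  assumes "finite A" "\<And>k. k \<in> A \<Longrightarrow> sep_cone (M k)"
  shows "sep_cone (\<lambda>x y. \<Sum>k\<in>A. M k x y)"
  using assms
proof (induction A rule: finite_induct)
  case empty
  then show ?case unfolding sep_cone_def by (intro exI[of _ "[]"]) simp
next
  case (insert k A)
  then show ?case using sep_cone_add[of "M k"] by simp
qed

definition sqnorm3 :: "(3 \<Rightarrow> complex) \<Rightarrow> real" where
  "sqnorm3 a = (\<Sum>x\<in>UNIV. (cmod (a x))\<^sup>2)"

lemma sqnorm3_nonneg: "0 \<le> sqnorm3 a"
  unfolding sqnorm3_def by (simp add: sum_nonneg)

lemma sqnorm3_eq_sum_mult_cnj: "complex_of_real (sqnorm3 a) = (\<Sum>x\<in>UNIV. a x * cnj (a x))"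
  unfolding sqnorm3_def by (simp add: of_real_sum complex_mult_cnj cmod_power2 del: of_real_power)

lemma unit3_iff_sqnorm3: "unit3 a \<longleftrightarrow> sqnorm3 a = 1"
  unfolding unit3_def sqnorm3_def ..

lemma exists_unit3_scaling: "\<exists>u. unit3 u \<and> a = (\<lambda>x. complex_of_real (sqrt (sqnorm3 a)) * u x)"
proof (cases "sqnorm3 a = 0")
  case True
  then have "a x = 0" for x
    unfolding sqnorm3_def by (subst (asm) sum_nonneg_eq_0_iff) auto
  then show ?thesis
    using True by (intro exI[of _ "\<lambda>x. if x = 0 then 1 else 0"]) (auto simp: unit3_def sum_UNIV_3)
next
  case False
  then have pos: "0 < sqnorm3 a" using sqnorm3_nonneg[of a] by linarith
  define u where "u x = a x / complex_of_real (sqrt (sqnorm3 a))" for x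
  have "sqnorm3 u = (\<Sum>x\<in>UNIV. (cmod (a x))\<^sup>2) / sqnorm3 a"
    unfolding sqnorm3_def[of u] u_def using pos
    by (simp add: norm_divide power_divide sum_divide_distrib)
  then have "unit3 u" using pos by (simp add: unit3_iff_sqnorm3 flip: sqnorm3_def)
  moreover have "a = (\<lambda>x. complex_of_real (sqrt (sqnorm3 a)) * u x)"
    using pos by (simp add: u_def)
  ultimately show ?thesis by blast
qed

lemma trace9_prod_state: "trace9 (prod_state a b) = complex_of_real (sqnorm3 a * sqnorm3 b)"
proof -
  have "trace9 (prod_state a b) = (\<Sum>x1\<in>UNIV. \<Sum>x2\<in>UNIV. (a x1 * cnj (a x1)) * (b x2 * cnj (b x2)))"
    unfolding trace9_def sum_UNIV_pair by (simp add: prod_state_def)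
  also have "\<dots> = complex_of_real (sqnorm3 a * sqnorm3 b)"
    by (simp add: sqnorm3_eq_sum_mult_cnj sum_product)
  finally show ?thesis .
qed

lemma separable_if_sep_cone:
  assumes "is_state M" "sep_cone M"
  shows "separable M"
proof -
  obtain L where L: "M = (\<lambda>x y. \<Sum>(a, b)\<leftarrow>L. prod_state a b x y)"
    using assms(2) unfolding sep_cone_def by blast
  obtain nz where nz: "\<And>a. unit3 (nz a) \<and> a = (\<lambda>x. complex_of_real (sqrt (sqnorm3 a)) * nz a x)"
    using exists_unit3_scaling by metis
  have prod_state_nz: "prod_state a b x y
      = complex_of_real (sqnorm3 a * sqnorm3 b) * prod_state (nz a) (nz b) x y" for a b x y
  proof -
    have "prod_state a b x y = prod_state (\<lambda>i. complex_of_real (sqrt (sqnorm3 a)) * nz a i)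
        (\<lambda>i. complex_of_real (sqrt (sqnorm3 b)) * nz b i) x y"
      using nz[of a] nz[of b] by (intro arg_cong2[where f = "\<lambda>u v. prod_state u v x y"]) blast+
    then show ?thesis
      by (cases x, cases y) (simp add: prod_state_def sqnorm3_nonneg mult_ac flip: of_real_mult)
  qed
  define w where "w k = sqnorm3 (fst (L ! k)) * sqnorm3 (snd (L ! k))" for k
  define a' where "a' k = nz (fst (L ! k))" for k
  define b' where "b' k = nz (snd (L ! k))" for k
  \<comment> \<open>\<open>prod_state_nz\<close> is instantiated because the simplifier would loop on it.\<close>
  have M: "M = (\<lambda>x y. \<Sum>k<length L. complex_of_real (w k) * prod_state (a' k) (b' k) x y)"
    unfolding L w_def a'_def b'_def
    by (simp add: sum_list_sum_nth atLeast0LessThan case_prod_unfold prod_state_nz[of "fst (L ! _)"])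
  have "1 = trace9 M" using assms(1) unfolding is_state_def by simp
  also have "\<dots> = (\<Sum>k<length L. complex_of_real (w k) * trace9 (prod_state (a' k) (b' k)))"
    unfolding M trace9_def by (simp add: sum_distrib_left sum.swap[of _ UNIV])
  also have "\<dots> = complex_of_real (\<Sum>k<length L. w k)"
    using nz by (simp add: trace9_prod_state a'_def b'_def unit3_iff_sqnorm3)
  finally have "(\<Sum>k<length L. w k) = 1" by (metis of_real_eq_1_iff)
  moreover have "\<forall>k<length L. 0 \<le> w k \<and> unit3 (a' k) \<and> unit3 (b' k)"
    using nz by (simp add: w_def a'_def b'_def sqnorm3_nonneg)
  ultimately show ?thesis unfolding separable_def M by blast
qed

lemma quadratic_form_outer:
  "(\<Sum>x\<in>UNIV. \<Sum>y\<in>UNIV. cnj (v x) * outer f f x y * v y)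
     = complex_of_real ((cmod (\<Sum>x\<in>UNIV. cnj (v x) * f x))\<^sup>2)"
proof -
  have "(\<Sum>x\<in>UNIV. \<Sum>y\<in>UNIV. cnj (v x) * outer f f x y * v y)
      = (\<Sum>x\<in>UNIV. cnj (v x) * f x) * cnj (\<Sum>y\<in>UNIV. cnj (v y) * f y)"
    by (simp add: outer_def sum_product mult_ac)
  then show ?thesis by (simp only: complex_norm_square cnj_sum complex_cnj_mult complex_cnj_cnj)
qed

lemma psd_sum_outer:
  assumes "\<forall>k<K. 0 \<le> w k"
  shows "psd (\<lambda>x y. \<Sum>k<K. complex_of_real (w k) * outer (f k) (f k) x y)"
  unfolding psd_def
proof (intro conjI allI)
  fix x y
  show "(\<Sum>k<K. complex_of_real (w k) * outer (f k) (f k) y x)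
      = cnj (\<Sum>k<K. complex_of_real (w k) * outer (f k) (f k) x y)"
    by (simp add: outer_def mult.commute)
next
  fix v :: ket9
  have "(\<Sum>x\<in>UNIV. \<Sum>y\<in>UNIV. cnj (v x) * (\<Sum>k<K. complex_of_real (w k) * outer (f k) (f k) x y) * v y)
      = (\<Sum>k<K. complex_of_real (w k) * (\<Sum>x\<in>UNIV. \<Sum>y\<in>UNIV. cnj (v x) * outer (f k) (f k) x y * v y))"
    by (simp add: sum_distrib_left sum_distrib_right mult_ac sum.swap[of _ "{..<K}"])
  also have "\<dots> = complex_of_real (\<Sum>k<K. w k * (cmod (\<Sum>x\<in>UNIV. cnj (v x) * f k x))\<^sup>2)"
    by (simp add: quadratic_form_outer of_real_sum del: of_real_power)
  finally show "0 \<le> Re (\<Sum>x\<in>UNIV. \<Sum>y\<in>UNIV. cnj (v x) * (\<Sum>k<K. complex_of_real (w k) * outer (f k) (f k) x y) * v y)"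
    using assms by (auto intro!: sum_nonneg)
qed

lemma PPT_if_separable:
  assumes "separable M"
  shows "PPT M"
proof -
  obtain K w a b where nonneg: "\<forall>k<K. 0 \<le> w k"
    and M: "M = (\<lambda>x y. \<Sum>k<(K::nat). complex_of_real (w k) * prod_state (a k) (b k) x y)"
    using assms unfolding separable_def by blast
  define f where "f k = (\<lambda>(x1, x2). a k x1 * cnj (b k x2))" for k
  have "partial_transpose M = (\<lambda>x y. \<Sum>k<K. complex_of_real (w k) * outer (f k) (f k) x y)"
    unfolding M partial_transpose_def f_def prod_state_def outer_def
    by (intro ext) (auto simp: case_prod_unfold mult_ac)
  then show ?thesis
    unfolding PPT_def using psd_sum_outer[OF nonneg] by simp
qed

section \<open>A truncated Stieltjes moment problem\<close>

lemma binary_form_nonneg_imp_sq_le: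
  fixes A B C :: real
  assumes nonneg: "\<And>s t. 0 \<le> A * s\<^sup>2 + 2 * B * s * t + C * t\<^sup>2"
  shows "B\<^sup>2 \<le> A * C"
proof -
  have "0 \<le> A" "0 \<le> C" using nonneg[of 1 0] nonneg[of 0 1] by simp_all
  consider "0 < A" | "0 < C" | "A = 0" "C = 0" using \<open>0 \<le> A\<close> \<open>0 \<le> C\<close> by linarith
  then show ?thesis
  proof cases
    case 1
    have "0 \<le> A * (- B)\<^sup>2 + 2 * B * (- B) * A + C * A\<^sup>2" by (rule nonneg)
    then have "0 \<le> A * (A * C - B\<^sup>2)" by (simp add: algebra_simps power2_eq_square)
    then show ?thesis using 1 by (simp add: zero_le_mult_iff)
  next
    case 2
    have "0 \<le> A * C\<^sup>2 + 2 * B * C * (- B) + C * (- B)\<^sup>2" by (rule nonneg)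
    then have "0 \<le> C * (A * C - B\<^sup>2)" by (simp add: algebra_simps power2_eq_square)
    then show ?thesis using 2 by (simp add: zero_le_mult_iff)
  next
    case 3
    then show ?thesis using nonneg[of 1 "- B"] by (simp add: power2_eq_square)
  qed
qed

lemma quadratic_roots_around:
  fixes a b c x :: real
  assumes "0 < a" "0 \<le> c" "0 \<le> x" "a * x\<^sup>2 + b * x + c < 0"
  obtains s1 s2 where "0 \<le> s1" "s1 < x" "x < s2"
    "a * s1\<^sup>2 + b * s1 + c = 0" "a * s2\<^sup>2 + b * s2 + c = 0"
proof -
  let ?q = "\<lambda>s. a * s\<^sup>2 + b * s + c"
  have cont: "continuous_on A ?q" for A by (intro continuous_intros)
  obtain s1 where s1: "0 \<le> s1" "s1 \<le> x" "?q s1 = 0"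
    using IVT2'[of ?q x 0 0] assms cont by auto
  define T where "T = x + \<bar>b\<bar> / a"
  have "a * T + b = a * x + (\<bar>b\<bar> + b)"
    using assms(1) by (simp add: T_def algebra_simps)
  moreover have "0 \<le> a * x" using assms(1,3) by simp
  ultimately have "0 \<le> a * T + b" by linarith
  moreover have "0 \<le> T" using assms(1,3) by (simp add: T_def)
  ultimately have "0 \<le> T * (a * T + b)" by simp
  then have "0 \<le> ?q T" using assms(2) by (simp add: algebra_simps power2_eq_square)
  moreover have "x \<le> T" using assms(1) by (simp add: T_def)
  ultimately obtain s2 where s2: "x \<le> s2" "?q s2 = 0"
    using IVT'[of ?q x 0 T] assms(4) cont by auto
  have "s1 \<noteq> x" "s2 \<noteq> x" using s1(3) s2(2) assms(4) by auto
  with s1 s2 show ?thesis by (intro that[of s1 s2]) auto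
qed

lemma two_point_weights:
  fixes s1 s2 x m :: real
  assumes "s1 \<le> x" "x \<le> s2" "s1 < s2" "0 \<le> m"
  obtains w1 w2 where "0 \<le> w1" "0 \<le> w2" "w1 + w2 = m" "w1 * s1 + w2 * s2 = m * x"
proof
  have "s2 - s1 \<noteq> 0" using assms(3) by simp
  then show "m * (s2 - x) / (s2 - s1) + m * (x - s1) / (s2 - s1) = m"
    "m * (s2 - x) / (s2 - s1) * s1 + m * (x - s1) / (s2 - s1) * s2 = m * x"
    by (simp_all add: divide_simps) (simp_all add: algebra_simps)
  show "0 \<le> m * (s2 - x) / (s2 - s1)" "0 \<le> m * (x - s1) / (s2 - s1)"
    using assms by simp_all
qed

lemma quadrature_nodes:
  fixes a \<beta> b m0 m1 :: real
  assumes "0 < a" "0 \<le> b" "0 < m0" "0 \<le> m1" "a * m1\<^sup>2 + \<beta> * m1 * m0 + b * m0\<^sup>2 < 0"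
  obtains s1 s2 w1 w2 where "0 \<le> s1" "0 \<le> s2" "0 \<le> w1" "0 \<le> w2"
    "a * s1\<^sup>2 + \<beta> * s1 + b = 0" "a * s2\<^sup>2 + \<beta> * s2 + b = 0"
    "w1 + w2 = m0" "w1 * s1 + w2 * s2 = m1"
proof -
  define x where "x = m1 / m0"
  have "m0\<^sup>2 * (a * x\<^sup>2 + \<beta> * x + b) = a * m1\<^sup>2 + \<beta> * m1 * m0 + b * m0\<^sup>2"
    using assms(3) by (simp add: x_def field_simps power2_eq_square)
  then have "m0\<^sup>2 * (a * x\<^sup>2 + \<beta> * x + b) < 0" using assms(5) by simp
  then have "a * x\<^sup>2 + \<beta> * x + b < 0" by (simp add: mult_less_0_iff)
  moreover have "0 \<le> x" using assms(3,4) by (simp add: x_def)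
  ultimately obtain s1 s2 where s: "0 \<le> s1" "s1 < x" "x < s2"
    and roots: "a * s1\<^sup>2 + \<beta> * s1 + b = 0" "a * s2\<^sup>2 + \<beta> * s2 + b = 0"
    using quadratic_roots_around[OF assms(1,2)] by metis
  obtain w1 w2 where "0 \<le> w1" "0 \<le> w2" "w1 + w2 = m0" "w1 * s1 + w2 * s2 = m0 * x"
    using two_point_weights[of s1 x s2 m0] s assms(3) by auto
  moreover have "m0 * x = m1" using assms(3) by (simp add: x_def)
  ultimately show ?thesis using s roots that[of s1 s2 w1 w2] by auto
qed

lemma two_root_power_sums_recurrence:
  fixes a \<beta> \<gamma> x y v w :: real
  assumes "a * x\<^sup>2 + \<beta> * x + \<gamma> = 0" "a * y\<^sup>2 + \<beta> * y + \<gamma> = 0"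
  shows "a * (v * x ^ (n + 2) + w * y ^ (n + 2)) + \<beta> * (v * x ^ (n + 1) + w * y ^ (n + 1))
      + \<gamma> * (v * x ^ n + w * y ^ n) = 0"
proof -
  have "a * (v * x ^ (n + 2) + w * y ^ (n + 2)) + \<beta> * (v * x ^ (n + 1) + w * y ^ (n + 1))
      + \<gamma> * (v * x ^ n + w * y ^ n)
      = v * x ^ n * (a * x\<^sup>2 + \<beta> * x + \<gamma>) + w * y ^ n * (a * y\<^sup>2 + \<beta> * y + \<gamma>)"
    by (simp add: algebra_simps power_add power2_eq_square)
  then show ?thesis using assms by simp
qed

definition hankel_psd :: "(nat \<Rightarrow> real) \<Rightarrow> bool" where
  "hankel_psd c \<longleftrightarrow>
     (\<forall>x y z. 0 \<le> c 0 * x\<^sup>2 + c 2 * y\<^sup>2 + c 4 * z\<^sup>2 + 2 * c 1 * x * y + 2 * c 2 * x * z + 2 * c 3 * y * z) \<and>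
     (\<forall>x y. 0 \<le> c 1 * x\<^sup>2 + 2 * c 2 * x * y + c 3 * y\<^sup>2)"

text \<open>\<open>c 0, ..., c 4\<close> are the moments of \<open>w1 \<delta>(s1) + w2 \<delta>(s2)\<close> on \<open>[0, \<infinity>)\<close>, plus a mass \<open>wi\<close> at
  infinity that only \<open>c 4\<close> sees.\<close>

definition moment_representable :: "(nat \<Rightarrow> real) \<Rightarrow> bool" where
  "moment_representable c \<longleftrightarrow> (\<exists>w1 w2 s1 s2 wi. 0 \<le> w1 \<and> 0 \<le> w2 \<and> 0 \<le> s1 \<and> 0 \<le> s2 \<and> 0 \<le> wi \<and>
     (\<forall>n\<le>4. c n = w1 * s1 ^ n + w2 * s2 ^ n + (if n = 4 then wi else 0)))"

lemma moment_representable_intro: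
  assumes "0 \<le> w1" "0 \<le> w2" "0 \<le> s1" "0 \<le> s2"
    and "c 0 = w1 + w2" "c 1 = w1 * s1 + w2 * s2" "c 2 = w1 * s1\<^sup>2 + w2 * s2\<^sup>2"
    and "c 3 = w1 * s1 ^ 3 + w2 * s2 ^ 3" "w1 * s1 ^ 4 + w2 * s2 ^ 4 \<le> c 4"
  shows "moment_representable c"
  unfolding moment_representable_def
proof (intro exI conjI allI impI)
  fix n :: nat assume "n \<le> 4"
  then have "n = 0 \<or> n = 1 \<or> n = 2 \<or> n = 3 \<or> n = 4" by auto
  then show "c n = w1 * s1 ^ n + w2 * s2 ^ n + (if n = 4 then c 4 - (w1 * s1 ^ 4 + w2 * s2 ^ 4) else 0)"
    using assms(5-8) by auto
qed (use assms(1-4,9) in auto)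

lemma hankel_psd_binary_forms:
  assumes "hankel_psd c"
  shows "0 \<le> c 0 * s\<^sup>2 + 2 * c 1 * s * t + c 2 * t\<^sup>2"
    and "0 \<le> c 0 * s\<^sup>2 + 2 * c 2 * s * t + c 4 * t\<^sup>2"
    and "0 \<le> c 2 * s\<^sup>2 + 2 * c 3 * s * t + c 4 * t\<^sup>2"
    and "0 \<le> c 1 * s\<^sup>2 + 2 * c 2 * s * t + c 3 * t\<^sup>2"
proof -
  have Q: "0 \<le> c 0 * x\<^sup>2 + c 2 * y\<^sup>2 + c 4 * z\<^sup>2 + 2 * c 1 * x * y + 2 * c 2 * x * z + 2 * c 3 * y * z"
    for x y z
    using assms unfolding hankel_psd_def by blast
  show "0 \<le> c 0 * s\<^sup>2 + 2 * c 1 * s * t + c 2 * t\<^sup>2"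
    "0 \<le> c 0 * s\<^sup>2 + 2 * c 2 * s * t + c 4 * t\<^sup>2"
    "0 \<le> c 2 * s\<^sup>2 + 2 * c 3 * s * t + c 4 * t\<^sup>2"
    using Q[of s t 0] Q[of s 0 t] Q[of 0 s t] by (simp_all add: algebra_simps)
  show "0 \<le> c 1 * s\<^sup>2 + 2 * c 2 * s * t + c 3 * t\<^sup>2"
    using assms unfolding hankel_psd_def by blast
qed

lemma hankel_psd_minors:
  assumes "hankel_psd c"
  shows "(c 1)\<^sup>2 \<le> c 0 * c 2" "(c 2)\<^sup>2 \<le> c 0 * c 4" "(c 3)\<^sup>2 \<le> c 2 * c 4" "(c 2)\<^sup>2 \<le> c 1 * c 3"
  using hankel_psd_binary_forms[OF assms] by (auto intro: binary_form_nonneg_imp_sq_le)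

lemma hankel_psd_nonneg:
  assumes "hankel_psd c" "n \<le> 4"
  shows "0 \<le> c n"
proof -
  have "0 \<le> c 0" "0 \<le> c 2" "0 \<le> c 4" "0 \<le> c 1" "0 \<le> c 3"
    using hankel_psd_binary_forms[OF assms(1), of 1 0] hankel_psd_binary_forms[OF assms(1), of 0 1]
    by simp_all
  moreover have "n = 0 \<or> n = 1 \<or> n = 2 \<or> n = 3 \<or> n = 4" using assms(2) by auto
  ultimately show ?thesis by auto
qed

lemma moment_representable_if_c0_zero:
  assumes "hankel_psd c" "c 0 = 0"
  shows "moment_representable c"
proof (rule moment_representable_intro[of 0 0 0 0])
  have "c 1 = 0" "c 2 = 0" using hankel_psd_minors(1,2)[OF assms(1)] assms(2) by simp_all
  moreover from this have "c 3 = 0" using hankel_psd_minors(3)[OF assms(1)] by simp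
  ultimately show "c 1 = 0 * 0 + 0 * 0" "c 2 = 0 * 0\<^sup>2 + 0 * 0\<^sup>2" "c 3 = 0 * 0 ^ 3 + 0 * 0 ^ 3"
    by simp_all
  show "0 * 0 ^ 4 + 0 * 0 ^ 4 \<le> c 4" using hankel_psd_nonneg[OF assms(1)] by simp
qed (use assms(2) in simp_all)

lemma moment_representable_if_minor_singular:
  assumes "hankel_psd c" "0 < c 0" "c 0 * c 2 = (c 1)\<^sup>2"
  shows "moment_representable c"
proof -
  have Q: "0 \<le> c 0 * x\<^sup>2 + c 2 * y\<^sup>2 + c 4 * z\<^sup>2 + 2 * c 1 * x * y + 2 * c 2 * x * z + 2 * c 3 * y * z"
    for x y z
    using assms(1) unfolding hankel_psd_def by blast
  define m where "m = c 1 / c 0"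
  have c1: "c 1 = c 0 * m" using assms(2) by (simp add: m_def)
  have "c 0 * c 2 = c 0 * (c 0 * m\<^sup>2)" using assms(3) unfolding c1 by (simp add: power2_eq_square mult_ac)
  then have c2: "c 2 = c 0 * m\<^sup>2" using assms(2) by simp
  have "0 \<le> 0 * s\<^sup>2 + 2 * (c 1 * c 2 - c 0 * c 3) * s * t + c 4 * t\<^sup>2" for s t
    using Q[of "s * c 1" "- s * c 0" t] assms(3) by (simp add: algebra_simps power2_eq_square)
  then have "(c 1 * c 2 - c 0 * c 3)\<^sup>2 \<le> 0" using binary_form_nonneg_imp_sq_le by fastforce
  then have "c 0 * c 3 = c 1 * c 2" by simp
  then have "c 0 * c 3 = c 0 * (c 0 * m ^ 3)" unfolding c1 c2 by (simp add: power2_eq_square power3_eq_cube mult_ac)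
  then have c3: "c 3 = c 0 * m ^ 3" using assms(2) by simp
  have "0 \<le> (c 0)\<^sup>2 * (c 4 - c 0 * m ^ 4)"
    using Q[of 0 "c 1" "- c 0"] unfolding c1 c2 c3
    by (simp add: algebra_simps power2_eq_square power3_eq_cube power4_eq_xxxx)
  then have "c 0 * m ^ 4 \<le> c 4" using assms(2) by (simp add: zero_le_mult_iff)
  moreover have "0 \<le> m" using hankel_psd_nonneg[OF assms(1), of 1] assms(2) by (simp add: m_def)
  ultimately show ?thesis
    using assms(2) c1 c2 c3 by (intro moment_representable_intro[of "c 0" 0 m 0]) simp_all
qed

lemma moment_representable_if_minor_pos:
  assumes "hankel_psd c" "0 < c 0 * c 2 - (c 1)\<^sup>2"
  shows "moment_representable c"
proof -
  have Q: "0 \<le> c 0 * x\<^sup>2 + c 2 * y\<^sup>2 + c 4 * z\<^sup>2 + 2 * c 1 * x * y + 2 * c 2 * x * z + 2 * c 3 * y * z"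
    for x y z
    using assms(1) unfolding hankel_psd_def by blast
  \<comment> \<open>\<open>(b, \<beta>, a)\<close> are the cofactors of the last row of \<open>H = (c (i + j))\<close>, \<open>i, j \<le> 2\<close>, so
     \<open>H (b, \<beta>, a)\<^sup>T = (0, 0, det H)\<^sup>T\<close>: the polynomial \<open>a s\<^sup>2 + \<beta> s + b\<close> is orthogonal to \<open>1\<close> and \<open>s\<close>,
     and the form takes the value \<open>a * det H\<close> at \<open>(b, \<beta>, a)\<close>.\<close>
  define a where "a = c 0 * c 2 - (c 1)\<^sup>2"
  define \<beta> where "\<beta> = c 1 * c 2 - c 0 * c 3"
  define b where "b = c 1 * c 3 - (c 2)\<^sup>2"
  have a: "0 < a" using assms(2) by (simp add: a_def)
  have c0: "0 < c 0"
    using a hankel_psd_nonneg[OF assms(1), of 0] by (auto simp: a_def order_le_less)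
  have orth: "a * c 2 + \<beta> * c 1 + b * c 0 = 0" "a * c 3 + \<beta> * c 2 + b * c 1 = 0"
    by (simp_all add: a_def \<beta>_def b_def algebra_simps power2_eq_square)
  have "0 \<le> a * (a * c 4 + \<beta> * c 3 + b * c 2)"
    using Q[of b \<beta> a] by (simp add: a_def \<beta>_def b_def algebra_simps power2_eq_square)
  then have det: "0 \<le> a * c 4 + \<beta> * c 3 + b * c 2" using a by (simp add: zero_le_mult_iff)
  have "a * (c 1)\<^sup>2 + \<beta> * c 1 * c 0 + b * (c 0)\<^sup>2 = - a\<^sup>2"
    by (simp add: a_def \<beta>_def b_def algebra_simps power2_eq_square)
  then have neg: "a * (c 1)\<^sup>2 + \<beta> * c 1 * c 0 + b * (c 0)\<^sup>2 < 0" using a by simp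
  have "0 \<le> b" using hankel_psd_minors(4)[OF assms(1)] by (simp add: b_def)
  have "0 \<le> c 1" using hankel_psd_nonneg[OF assms(1), of 1] by simp
  obtain s1 s2 w1 w2 where nonneg: "0 \<le> s1" "0 \<le> s2" "0 \<le> w1" "0 \<le> w2"
    and roots: "a * s1\<^sup>2 + \<beta> * s1 + b = 0" "a * s2\<^sup>2 + \<beta> * s2 + b = 0"
    and u01: "w1 + w2 = c 0" "w1 * s1 + w2 * s2 = c 1"
    by (rule quadrature_nodes[OF a \<open>0 \<le> b\<close> c0 \<open>0 \<le> c 1\<close> neg])
  define u where "u n = w1 * s1 ^ n + w2 * s2 ^ n" for n
  have rec: "a * u 2 + \<beta> * u 1 + b * u 0 = 0" "a * u 3 + \<beta> * u 2 + b * u 1 = 0"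
    "a * u 4 + \<beta> * u 3 + b * u 2 = 0"
    using two_root_power_sums_recurrence[OF roots, where v = w1 and w = w2 and n = 0]
      two_root_power_sums_recurrence[OF roots, where v = w1 and w = w2 and n = 1]
      two_root_power_sums_recurrence[OF roots, where v = w1 and w = w2 and n = 2]
    by (simp_all add: u_def power2_eq_square power3_eq_cube mult_ac)
  have u0: "u 0 = c 0" and u1: "u 1 = c 1" using u01 by (simp_all add: u_def)
  have "a * u 2 = a * c 2" using rec(1) orth(1) unfolding u0 u1 by linarith
  then have u2: "u 2 = c 2" using a by simp
  have "a * u 3 = a * c 3" using rec(2) orth(2) unfolding u1 u2 by linarith
  then have u3: "u 3 = c 3" using a by simp
  have "a * u 4 \<le> a * c 4" using rec(3) det unfolding u2 u3 by linarith
  then have "u 4 \<le> c 4" using a by simp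
  with u2 u3 show ?thesis
    using a nonneg u01 by (intro moment_representable_intro[of w1 w2 s1 s2]) (simp_all add: u_def)
qed

theorem moment_representable_if_hankel_psd:
  assumes "hankel_psd c"
  shows "moment_representable c"
proof -
  have "0 \<le> c 0" "(c 1)\<^sup>2 \<le> c 0 * c 2"
    using hankel_psd_nonneg[OF assms, of 0] hankel_psd_minors(1)[OF assms] by simp_all
  then consider "c 0 = 0" | "0 < c 0" "c 0 * c 2 = (c 1)\<^sup>2" | "0 < c 0 * c 2 - (c 1)\<^sup>2"
    by fastforce
  then show ?thesis
    by cases (use assms moment_representable_if_c0_zero moment_representable_if_minor_singular
        moment_representable_if_minor_pos in blast)+
qed

section \<open>Operators graded by total degree\<close>

lemma sum_roots_of_unity_orthogonality:
  fixes N m n :: nat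
  assumes "m < N" "n < N"
  defines "\<omega> \<equiv> cis (2 * pi / N)"
  shows "(\<Sum>k<N. (\<omega> ^ k) ^ m * cnj (\<omega> ^ k) ^ n) = (if m = n then of_nat N else 0)"
proof -
  define \<theta> where "\<theta> = 2 * pi * (real m - real n) / N"
  have summand: "(\<omega> ^ k) ^ m * cnj (\<omega> ^ k) ^ n = cis \<theta> ^ k" for k
    by (simp add: \<omega>_def \<theta>_def DeMoivre cis_cnj cis_mult flip: power_mult)
      (simp add: algebra_simps diff_divide_distrib)
  show ?thesis
  proof (cases "m = n")
    case True
    then show ?thesis unfolding summand by (simp add: \<theta>_def)
  next
    case False
    have "cis \<theta> \<noteq> 1"
    proof
      assume "cis \<theta> = 1"
      then have "cos \<theta> = 1" by (metis cis.sel(1) one_complex.sel(1))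
      then obtain j :: int where j: "\<theta> = real_of_int j * 2 * pi" using cos_one_2pi_int by auto
      then have "2 * pi * (real m - real n) = 2 * pi * (real_of_int j * N)"
        using assms by (simp add: \<theta>_def field_simps)
      then have "real m - real n = real_of_int j * N" by simp
      moreover have "j \<noteq> 0" using False calculation by auto
      then have "1 \<le> \<bar>real_of_int j\<bar>" by linarith
      then have "1 * real N \<le> \<bar>real_of_int j\<bar> * real N" by (intro mult_right_mono) auto
      then have "N \<le> \<bar>real_of_int j * N\<bar>" by (simp add: abs_mult)
      ultimately show False using assms by linarith
    qed
    moreover have "cis \<theta> ^ N = 1"
      using assms by (simp add: DeMoivre \<theta>_def)
    ultimately have "(\<Sum>k<N. cis \<theta> ^ k) = 0" by (simp add: geometric_sum)
    then show ?thesis using False unfolding summand by simp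
  qed
qed

definition deg :: "3 \<Rightarrow> nat" where
  "deg a = (if a = 0 then 0 else if a = 1 then 1 else 2)"

definition total_deg :: "3 \<times> 3 \<Rightarrow> nat" where
  "total_deg x = deg (fst x) + deg (snd x)"

definition binom_root :: "3 \<Rightarrow> real" where
  "binom_root a = sqrt (real (2 choose deg a))"

definition pair_weight :: "3 \<times> 3 \<Rightarrow> real" where
  "pair_weight x = binom_root (fst x) * binom_root (snd x)"

definition coherent :: "complex \<Rightarrow> 3 \<Rightarrow> complex" where
  "coherent z a = complex_of_real (binom_root a) * z ^ deg a"

text \<open>\<open>moment_op c = \<Sum>n c n |w_n\<rangle>\<langle>w_n|\<close> with \<open>w_n = \<Sum>total_deg x = n pair_weight x |x\<rangle>\<close>; in the Dicke
  basis \<open>w_0, ..., w_4\<close> are \<open>D00, 2 D01, \<surd>2 D02 + 2 D11, 2 D12, D22\<close>.\<close>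

definition moment_op :: "(nat \<Rightarrow> real) \<Rightarrow> op9" where
  "moment_op c x y =
     (if total_deg x = total_deg y
      then complex_of_real (pair_weight x * pair_weight y * c (total_deg x)) else 0)"

lemma total_deg_le_4: "total_deg x \<le> 4"
  by (simp add: total_deg_def deg_def)

lemma prod_state_coherent:
  "prod_state (coherent z) (coherent z) x y
     = complex_of_real (pair_weight x * pair_weight y) * z ^ total_deg x * cnj z ^ total_deg y"
  by (cases x, cases y) (simp add: prod_state_def coherent_def pair_weight_def total_deg_def power_add mult_ac)

lemma moment_op_power_eq_phase_average:
  fixes s :: real
  assumes "0 \<le> s"
  defines "\<omega> \<equiv> cis (2 * pi / 5)"
  shows "moment_op (\<lambda>n. s ^ n) x y = (\<Sum>k<5. complex_of_real (1 / 5) *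
     prod_state (coherent (complex_of_real (sqrt s) * \<omega> ^ k))
       (coherent (complex_of_real (sqrt s) * \<omega> ^ k)) x y)"
proof -
  \<comment> \<open>Five phases suffice to separate the total degrees \<open>0, ..., 4\<close>.\<close>
  have "total_deg x < 5" "total_deg y < 5" using total_deg_le_4[of x] total_deg_le_4[of y] by simp_all
  have "(\<Sum>k<5. complex_of_real (1 / 5) *
      prod_state (coherent (complex_of_real (sqrt s) * \<omega> ^ k))
        (coherent (complex_of_real (sqrt s) * \<omega> ^ k)) x y)
    = complex_of_real (pair_weight x * pair_weight y * sqrt s ^ (total_deg x + total_deg y) / 5) *
      (\<Sum>k<5. (\<omega> ^ k) ^ total_deg x * cnj (\<omega> ^ k) ^ total_deg y)"
    by (simp add: prod_state_coherent sum_distrib_left power_mult_distrib power_add mult_ac)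
  also have "\<dots> = moment_op (\<lambda>n. s ^ n) x y"
    using sum_roots_of_unity_orthogonality[OF \<open>total_deg x < 5\<close> \<open>total_deg y < 5\<close>] assms(1)
    by (simp add: \<omega>_def moment_op_def power_mult flip: mult_2 of_real_power)
  finally show ?thesis ..
qed

lemma sep_cone_moment_op_power:
  fixes s :: real
  assumes "0 \<le> s"
  shows "sep_cone (moment_op (\<lambda>n. s ^ n))"
  unfolding moment_op_power_eq_phase_average[OF assms]
  by (intro sep_cone_sum sep_cone_scale sep_cone_prod_state) simp_all

lemma moment_op_top_degree:
  defines "e \<equiv> \<lambda>a. if a = 2 then 1 else 0"
  shows "moment_op (\<lambda>n. if n = 4 then 1 else 0) = prod_state e e"
proof (intro ext)
  fix x y :: "3 \<times> 3"
  have top: "total_deg x = 4 \<longleftrightarrow> x = (2, 2)" for x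
    using exhaust_3[of "fst x"] exhaust_3[of "snd x"] by (cases x) (auto simp: total_deg_def deg_def)
  show "moment_op (\<lambda>n. if n = 4 then 1 else 0) x y = prod_state e e x y"
    using top[of x] top[of y] unfolding e_def
    by (cases x, cases y) (auto simp: moment_op_def prod_state_def pair_weight_def binom_root_def deg_def)
qed

lemma sep_cone_moment_op:
  assumes "moment_representable c"
  shows "sep_cone (moment_op c)"
proof -
  obtain w1 w2 s1 s2 wi where nonneg: "0 \<le> w1" "0 \<le> w2" "0 \<le> s1" "0 \<le> s2" "0 \<le> wi"
    and c: "\<forall>n\<le>4. c n = w1 * s1 ^ n + w2 * s2 ^ n + (if n = 4 then wi else 0)"
    using assms unfolding moment_representable_def by blast
  have "moment_op c = (\<lambda>x y. complex_of_real w1 * moment_op (\<lambda>n. s1 ^ n) x y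
      + complex_of_real w2 * moment_op (\<lambda>n. s2 ^ n) x y
      + complex_of_real wi * moment_op (\<lambda>n. if n = 4 then 1 else 0) x y)"
    using c total_deg_le_4 by (intro ext) (simp add: moment_op_def algebra_simps)
  then show ?thesis
    unfolding moment_op_top_degree
    by (simp only:) (intro sep_cone_add sep_cone_scale sep_cone_moment_op_power sep_cone_prod_state nonneg)
qed

definition dicke_moments :: "(3 \<Rightarrow> 3 \<Rightarrow> real) \<Rightarrow> nat \<Rightarrow> real" where
  "dicke_moments p n = [p 0 0, p 0 1 / 4, p 0 2 / 2, p 1 2 / 4, p 2 2] ! n"

lemma sum_upper_pairs:
  "(\<Sum>(i, j)\<in>upper_pairs. f i j) = f 0 0 + f 0 1 + f 0 2 + f 1 1 + f 1 2 + f 2 2"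
  by (simp add: upper_pairs_def add.assoc)

lemma rhoS_eq_moment_op:
  assumes "p 1 1 = 2 * p 0 2" and "complex_of_real (p 1 1) = complex_of_real (sqrt 2) * \<alpha>"
  shows "rhoS p \<alpha> = moment_op (dicke_moments p)"
proof (intro ext)
  fix x y :: "3 \<times> 3"
  have "complex_of_real (sqrt 2) * \<alpha> = complex_of_real (sqrt 2) * complex_of_real (sqrt 2 * p 0 2)"
    using assms by (simp flip: of_real_mult add: mult.assoc[symmetric])
  then have \<alpha>: "\<alpha> = complex_of_real (sqrt 2 * p 0 2)" by simp
  have sqrt2: "complex_of_real (sqrt 2) * complex_of_real (sqrt 2) = 2"
    by (simp flip: of_real_mult)
  obtain a b c d where "x = (a, b)" "y = (c, d)" by (cases x, cases y)
  then show "rhoS p \<alpha> x y = moment_op (dicke_moments p) x y"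
    using exhaust_3[of a] exhaust_3[of b] exhaust_3[of c] exhaust_3[of d]
    by (elim disjE) (simp_all add: rhoS_def sum_upper_pairs outer_def dicke_def moment_op_def
        dicke_moments_def total_deg_def deg_def pair_weight_def binom_root_def assms(1) \<alpha> sqrt2)
qed

lemma hankel_psd_if_PPT_moment_op:
  assumes "PPT (moment_op c)"
  shows "hankel_psd c"
proof -
  have form: "0 \<le> Re (\<Sum>i\<in>UNIV. \<Sum>j\<in>UNIV. cnj (v i) * partial_transpose (moment_op c) i j * v j)" for v
    using assms unfolding PPT_def psd_def by blast
  \<comment> \<open>On vectors supported on the \<open>|aa\<rangle>\<close> (where \<open>pair_weight (1, 1) = 2\<close>) the partial transpose
    is the first Hankel form; on the span of \<open>|01\<rangle>, |12\<rangle>\<close> it is twice the shifted one.\<close>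
  have "0 \<le> c 0 * x\<^sup>2 + c 2 * y\<^sup>2 + c 4 * z\<^sup>2 + 2 * c 1 * x * y + 2 * c 2 * x * z + 2 * c 3 * y * z"
    for x y z
    using form[of "\<lambda>(a, b). if a \<noteq> b then 0
      else complex_of_real (if a = 0 then x else if a = 1 then y / 2 else z)"]
    by (simp add: sum_UNIV_pair sum_UNIV_3 partial_transpose_def moment_op_def total_deg_def deg_def
        pair_weight_def binom_root_def algebra_simps power2_eq_square numeral_eq_Suc)
  moreover have "0 \<le> c 1 * x\<^sup>2 + 2 * c 2 * x * y + c 3 * y\<^sup>2" for x y
    using form[of "\<lambda>(a, b). if (a, b) = (0, 1) then complex_of_real x
      else if (a, b) = (1, 2) then complex_of_real y else 0"]
    by (simp add: sum_UNIV_pair sum_UNIV_3 partial_transpose_def moment_op_def total_deg_def deg_def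
        pair_weight_def binom_root_def algebra_simps power2_eq_square numeral_eq_Suc)
  ultimately show ?thesis unfolding hankel_psd_def by blast
qed

theorem corollary1:
  fixes p :: "3 \<Rightarrow> 3 \<Rightarrow> real" and \<alpha> :: complex
  assumes "\<forall>(i, j)\<in>upper_pairs. 0 \<le> p i j"
    and "(\<Sum>(i, j)\<in>upper_pairs. p i j) = 1"
    and "p 1 1 = 2 * p 0 2"
    and "complex_of_real (p 1 1) = complex_of_real (sqrt 2) * \<alpha>"
    and "is_state (rhoS p \<alpha>)"
  shows "separable (rhoS p \<alpha>) \<longleftrightarrow> PPT (rhoS p \<alpha>)"
proof
  assume "separable (rhoS p \<alpha>)"
  then show "PPT (rhoS p \<alpha>)" by (rule PPT_if_separable)
next
  have rho: "rhoS p \<alpha> = moment_op (dicke_moments p)"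
    using assms(3,4) by (rule rhoS_eq_moment_op)
  assume "PPT (rhoS p \<alpha>)"
  then have "hankel_psd (dicke_moments p)"
    unfolding rho by (rule hankel_psd_if_PPT_moment_op)
  then have "sep_cone (rhoS p \<alpha>)"
    unfolding rho by (intro sep_cone_moment_op moment_representable_if_hankel_psd)
  then show "separable (rhoS p \<alpha>)"
    using assms(5) by (intro separable_if_sep_cone)
qed

end
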